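(* Let $n,m$ be even positive integers. If $n\geq 4$ or $m\geq 4$, then the torus $T_{n,m}$ satisfies $T_{n,m}=0$ as an instance of Bipartite Influence. Let $n$ be an even positive integer and $m$ a positive integer. If ($n\geq 4$ and $m$ is even) or $n=4k+2$ for some positive integer $k$, then the cylinder $C_{n,m}$ satisfies $C_{n,m}=0$ as an instance of Bipartite Influence.
   Context: Cylinder $C_{n,m}$ ($n$ even): vertices $v_{i,j}$, $1\le i\le n$, $1\le j\le m$; $v_{i,j}$ and $v_{i',j'}$ are adjacent iff ($i=i'$ and $j=j'\pm1$) or ($j=j'$ and $i\equiv i'\pm1 \pmod n$). Torus $T_{n,m}$ ($n,m$ even): same vertices, adjacent iff ($i=i'$ and $j\equiv j'\pm1\pmod m$) or ($j=j'$ and $i\equiv i'\pm 1\pmod n$). In both, $v_{i,j}$ is black iff $i+j$ is even, white otherwise. Bipartite Influence: isolated vertices are credited to the owner of their colour (black to Left, white to Right); Left picks a black vertex $x$ and removes $x$, its neighbours and the vertices that become isolated (credited to her); Right likewise with white vertices; score = Left's total minus Right's. $G=0$ means $Ls(G+X)=Ls(X)$ and $Rs(G+X)=Rs(X)$ for every position $X$ (disjoint union as sum), where $Ls,Rs$ are optimal scores with Left, resp. Right, moving first. *)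

theory Defs
  imports Main
begin

text \<open>A position of Bipartite Influence: a vertex set V, a colouring
  (True = black, owned by Left; False = white, owned by Right) and an
  adjacency relation.\<close>

type_synonym 'v pos = "'v set \<times> ('v \<Rightarrow> bool) \<times> ('v \<Rightarrow> 'v \<Rightarrow> bool)"

definition pverts :: "'v pos \<Rightarrow> 'v set" where "pverts P = fst P"
definition pblack :: "'v pos \<Rightarrow> 'v \<Rightarrow> bool" where "pblack P = fst (snd P)"
definition padj :: "'v pos \<Rightarrow> 'v \<Rightarrow> 'v \<Rightarrow> bool" where "padj P = snd (snd P)"

definition valid_pos :: "'v pos \<Rightarrow> bool" where
  "valid_pos P \<longleftrightarrow> finite (pverts P)
     \<and> (\<forall>x y. padj P x y \<longrightarrow> padj P y x)
     \<and> (\<forall>x. \<not> padj P x x)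
     \<and> (\<forall>x y. padj P x y \<longrightarrow> x \<in> pverts P \<and> y \<in> pverts P \<and> pblack P x \<noteq> pblack P y)"

definition isolated_in :: "('v \<Rightarrow> 'v \<Rightarrow> bool) \<Rightarrow> 'v set \<Rightarrow> 'v set" where
  "isolated_in E S = {v \<in> S. \<forall>w \<in> S. \<not> E v w}"

text \<open>Vertices removed (and credited to the mover) when x is chosen in the
  induced subgraph on S: x, its neighbours, and the vertices that become isolated.\<close>
definition removed :: "('v \<Rightarrow> 'v \<Rightarrow> bool) \<Rightarrow> 'v set \<Rightarrow> 'v \<Rightarrow> 'v set" where
  "removed E S x = (let C = insert x {y \<in> S. E x y} in C \<union> isolated_in E (S - C))"

text \<open>Optimal score (Left total minus Right total) of the remaining game on the
  vertex set S (which contains no isolated vertices), with fuel k;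
  the flag says whether Left is to move.\<close>
fun gval :: "('v \<Rightarrow> bool) \<Rightarrow> ('v \<Rightarrow> 'v \<Rightarrow> bool) \<Rightarrow> nat \<Rightarrow> bool \<Rightarrow> 'v set \<Rightarrow> int" where
  "gval B E 0 left S = 0"
| "gval B E (Suc k) left S =
     (if S = {} then 0
      else if left then
        Max {int (card (removed E S x)) + gval B E k False (S - removed E S x) | x. x \<in> S \<and> B x}
      else
        Min {- int (card (removed E S y)) + gval B E k True (S - removed E S y) | y. y \<in> S \<and> \<not> B y})"

text \<open>Initially isolated vertices are credited to the owner of their colour.\<close>
definition iso_score :: "'v pos \<Rightarrow> int" where
  "iso_score P = int (card {v \<in> isolated_in (padj P) (pverts P). pblack P v})
               - int (card {v \<in> isolated_in (padj P) (pverts P). \<not> pblack P v})"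

definition core :: "'v pos \<Rightarrow> 'v set" where
  "core P = pverts P - isolated_in (padj P) (pverts P)"

definition Ls :: "'v pos \<Rightarrow> int" where
  "Ls P = iso_score P + gval (pblack P) (padj P) (card (core P)) True (core P)"

definition Rs :: "'v pos \<Rightarrow> int" where
  "Rs P = iso_score P + gval (pblack P) (padj P) (card (core P)) False (core P)"

definition psum :: "'a pos \<Rightarrow> 'b pos \<Rightarrow> ('a + 'b) pos" where
  "psum G X = (Inl ` pverts G \<union> Inr ` pverts X,
               case_sum (pblack G) (pblack X),
               (\<lambda>u w. case (u, w) of
                   (Inl a, Inl b) \<Rightarrow> padj G a b
                 | (Inr a, Inr b) \<Rightarrow> padj X a b
                 | _ \<Rightarrow> False))"

definition is_zero :: "'a pos \<Rightarrow> 'b itself \<Rightarrow> bool" where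
  "is_zero G _ \<longleftrightarrow> (\<forall>X :: 'b pos. valid_pos X \<longrightarrow>
       Ls (psum G X) = Ls X \<and> Rs (psum G X) = Rs X)"

definition cyl_adj :: "nat \<Rightarrow> nat \<Rightarrow> nat \<times> nat \<Rightarrow> nat \<times> nat \<Rightarrow> bool" where
  "cyl_adj n m u w \<longleftrightarrow> u \<in> {1..n} \<times> {1..m} \<and> w \<in> {1..n} \<times> {1..m} \<and>
     ((fst u = fst w \<and> (snd u = snd w + 1 \<or> snd w = snd u + 1)) \<or>
      (snd u = snd w \<and> ((fst u) mod n = (fst w + 1) mod n \<or> (fst w) mod n = (fst u + 1) mod n)))"

definition tor_adj :: "nat \<Rightarrow> nat \<Rightarrow> nat \<times> nat \<Rightarrow> nat \<times> nat \<Rightarrow> bool" where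
  "tor_adj n m u w \<longleftrightarrow> u \<in> {1..n} \<times> {1..m} \<and> w \<in> {1..n} \<times> {1..m} \<and>
     ((fst u = fst w \<and> ((snd u) mod m = (snd w + 1) mod m \<or> (snd w) mod m = (snd u + 1) mod m)) \<or>
      (snd u = snd w \<and> ((fst u) mod n = (fst w + 1) mod n \<or> (fst w) mod n = (fst u + 1) mod n)))"

definition grid_black :: "nat \<times> nat \<Rightarrow> bool" where
  "grid_black u \<longleftrightarrow> even (fst u + snd u)"

definition cylinder :: "nat \<Rightarrow> nat \<Rightarrow> (nat \<times> nat) pos" where
  "cylinder n m = ({1..n} \<times> {1..m}, grid_black, cyl_adj n m)"

definition torus :: "nat \<Rightarrow> nat \<Rightarrow> (nat \<times> nat) pos" where
  "torus n m = ({1..n} \<times> {1..m}, grid_black, tor_adj n m)"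

end

theory Submission
  imports Defs
begin

(* Let \<sigma> be an involution of G that reverses colours, preserves adjacency and maps no vertex to
   itself or to a neighbour.  Then x and \<sigma> x are non-adjacent of opposite colours, hence at distance
   at least three, so after a move at x the move at \<sigma> x removes exactly the image of what x removed
   and leaves a \<sigma>-invariant position.  In G + X the player moving second in G can therefore answer
   every move there by its mirror image, while moves in X are answered as in X; by induction this
   gives Ls (G + X) \<le> Ls X and Rs X \<le> Rs (G + X).  Conversely the first player can open with an
   optimal first move of X.  This fails only when X has no moves, where the mirror bounds give
   Ls G \<le> 0 \<le> Rs G, and Rs G \<le> Ls G because Bipartite Influence has no zugzwang: making a move
   without passing the turn never hurts the mover.
   On tori and cylinders \<sigma> is the half-turn of one cycle factor, combined with a reflection of the
   other factor when the half-turn alone preserves colours. *)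

section \<open>Optimal scores\<close>

definition no_isolated :: "('v \<Rightarrow> 'v \<Rightarrow> bool) \<Rightarrow> 'v set \<Rightarrow> bool" where
  "no_isolated E S \<longleftrightarrow> (\<forall>v\<in>S. \<exists>w\<in>S. E v w)"

(* Fuel card S suffices because every move removes at least the chosen vertex. *)
definition score :: "('v \<Rightarrow> bool) \<Rightarrow> ('v \<Rightarrow> 'v \<Rightarrow> bool) \<Rightarrow> bool \<Rightarrow> 'v set \<Rightarrow> int" where
  "score B E left S = gval B E (card S) left S"

lemma self_in_removed: "x \<in> removed E S x"
  by (simp add: removed_def Let_def)

lemma removed_subset: "x \<in> S \<Longrightarrow> removed E S x \<subseteq> S"
  by (auto simp: removed_def Let_def isolated_in_def)

lemma card_Diff_removed_less: "finite S \<Longrightarrow> x \<in> S \<Longrightarrow> card (S - removed E S x) < card S"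
  by (rule psubset_card_mono) (auto intro: self_in_removed)

lemma card_removed_add_card_Diff:
  "finite S \<Longrightarrow> x \<in> S \<Longrightarrow> int (card (removed E S x)) + int (card (S - removed E S x)) = int (card S)"
  using card_Diff_subset[of "removed E S x" S] card_mono[of S "removed E S x"]
    removed_subset[of x S E] finite_subset[of "removed E S x" S] by simp

lemma card_removed_twice:
  assumes "finite T" "a \<in> T" "b \<in> T - removed E T a"
  shows "int (card (removed E T a)) + int (card (removed E (T - removed E T a) b))
    + int (card (T - removed E T a - removed E (T - removed E T a) b)) = int (card T)"
  using card_removed_add_card_Diff[OF assms(1,2), of E]
    card_removed_add_card_Diff[of "T - removed E T a" b E] assms by simp

lemma gval_empty [simp]: "gval B E k left {} = 0"
  by (cases k) simp_all

lemma gval_fuel_irrelevant: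
  assumes "finite S" "card S \<le> k" "card S \<le> k'"
  shows "gval B E k left S = gval B E k' left S"
  using assms
proof (induction k arbitrary: k' left S)
  case (Suc k)
  show ?case
  proof (cases "S = {}")
    case False
    with Suc.prems obtain k'' where k': "k' = Suc k''"
      by (metis card_0_eq le_zero_eq not0_implies_Suc)
    have IH: "gval B E k q (S - removed E S x) = gval B E k'' q (S - removed E S x)"
      if "x \<in> S" for x q
      using Suc card_Diff_removed_less[OF Suc.prems(1) that, of E] k' by auto
    have options: "(\<lambda>x. c x + gval B E k q (S - removed E S x)) ` {x \<in> S. P x}
        = (\<lambda>x. c x + gval B E k'' q (S - removed E S x)) ` {x \<in> S. P x}" for c P q
      by (rule image_cong) (auto simp: IH)
    show ?thesis
      unfolding k' gval.simps image_Collect[symmetric] options ..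
  qed simp
qed simp

lemma gval_eq_score: "finite S \<Longrightarrow> card S \<le> k \<Longrightarrow> gval B E k left S = score B E left S"
  unfolding score_def by (rule gval_fuel_irrelevant) auto

lemma score_empty [simp]: "score B E left {} = 0"
  by (simp add: score_def)

lemma score_left:
  assumes "finite S" "S \<noteq> {}"
  shows "score B E True S =
    Max ((\<lambda>x. int (card (removed E S x)) + score B E False (S - removed E S x)) ` {x \<in> S. B x})"
proof -
  obtain k where k: "card S = Suc k"
    using assms by (metis card_0_eq not0_implies_Suc)
  have "gval B E k False (S - removed E S x) = score B E False (S - removed E S x)" if "x \<in> S" for x
    using card_Diff_removed_less[OF assms(1) that, of E] k assms(1) by (intro gval_eq_score) auto
  then have "(\<lambda>x. int (card (removed E S x)) + gval B E k False (S - removed E S x)) ` {x \<in> S. B x}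
      = (\<lambda>x. int (card (removed E S x)) + score B E False (S - removed E S x)) ` {x \<in> S. B x}"
    by (intro image_cong) auto
  then show ?thesis
    using assms(2) unfolding score_def k gval.simps image_Collect[symmetric] by simp
qed

lemma score_right:
  assumes "finite S" "S \<noteq> {}"
  shows "score B E False S =
    Min ((\<lambda>y. - int (card (removed E S y)) + score B E True (S - removed E S y)) ` {y \<in> S. \<not> B y})"
proof -
  obtain k where k: "card S = Suc k"
    using assms by (metis card_0_eq not0_implies_Suc)
  have "gval B E k True (S - removed E S y) = score B E True (S - removed E S y)" if "y \<in> S" for y
    using card_Diff_removed_less[OF assms(1) that, of E] k assms(1) by (intro gval_eq_score) auto
  then have "(\<lambda>y. - int (card (removed E S y)) + gval B E k True (S - removed E S y)) ` {y \<in> S. \<not> B y}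
      = (\<lambda>y. - int (card (removed E S y)) + score B E True (S - removed E S y)) ` {y \<in> S. \<not> B y}"
    by (intro image_cong) auto
  then show ?thesis
    using assms(2) unfolding score_def k gval.simps image_Collect[symmetric] by simp
qed

lemma score_left_ge:
  assumes "finite S" "x \<in> S" "B x"
  shows "int (card (removed E S x)) + score B E False (S - removed E S x) \<le> score B E True S"
  using assms by (subst score_left) auto

lemma score_right_le:
  assumes "finite S" "y \<in> S" "\<not> B y"
  shows "score B E False S \<le> - int (card (removed E S y)) + score B E True (S - removed E S y)"
  using assms by (subst score_right) auto

lemma score_left_attained:
  assumes "finite S" "\<exists>x\<in>S. B x"
  obtains x where "x \<in> S" "B x"
    "score B E True S = int (card (removed E S x)) + score B E False (S - removed E S x)"
proof -
  let ?f = "\<lambda>x. int (card (removed E S x)) + score B E False (S - removed E S x)"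
  have "Max (?f ` {x \<in> S. B x}) \<in> ?f ` {x \<in> S. B x}"
    using assms by (intro Max_in) auto
  with assms that show ?thesis
    by (subst (asm) score_left[symmetric]) auto
qed

lemma score_right_attained:
  assumes "finite S" "\<exists>y\<in>S. \<not> B y"
  obtains y where "y \<in> S" "\<not> B y"
    "score B E False S = - int (card (removed E S y)) + score B E True (S - removed E S y)"
proof -
  let ?f = "\<lambda>y. - int (card (removed E S y)) + score B E True (S - removed E S y)"
  have "Min (?f ` {y \<in> S. \<not> B y}) \<in> ?f ` {y \<in> S. \<not> B y}"
    using assms by (intro Min_in) auto
  with assms that show ?thesis
    by (subst (asm) score_right[symmetric]) auto
qed

lemma isolated_in_image:
  assumes "inj_on f S" "\<And>a b. a \<in> S \<Longrightarrow> b \<in> S \<Longrightarrow> E' (f a) (f b) = E a b" "U \<subseteq> S"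
  shows "isolated_in E' (f ` U) = f ` isolated_in E U"
proof -
  have "(\<forall>w\<in>f ` U. \<not> E' (f v) w) \<longleftrightarrow> (\<forall>w\<in>U. \<not> E v w)" if "v \<in> U" for v
    using that assms(2,3) by (auto simp: subset_iff)
  then show ?thesis
    unfolding isolated_in_def by (auto simp: image_iff)
qed
lemma removed_image:
  assumes "inj_on f S" "\<And>a b. a \<in> S \<Longrightarrow> b \<in> S \<Longrightarrow> E' (f a) (f b) = E a b" "x \<in> S"
  shows "removed E' (f ` S) (f x) = f ` removed E S x"
proof -
  let ?C = "insert x {y \<in> S. E x y}"
  have "{y \<in> f ` S. E' (f x) y} = f ` {y \<in> S. E x y}"
    using assms(2,3) by (auto simp: image_iff)
  then have C: "insert (f x) {y \<in> f ` S. E' (f x) y} = f ` ?C"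
    by simp
  have D: "f ` S - f ` ?C = f ` (S - ?C)"
    by (rule inj_on_image_set_diff[OF assms(1), symmetric]) (use assms(3) in auto)
  show ?thesis
    using isolated_in_image[where E=E and E'=E', OF assms(1,2) Diff_subset[of S ?C]]
    unfolding removed_def Let_def C D by (simp add: image_Un)
qed

lemma score_image:
  assumes "inj_on f S" "finite S"
    and "\<And>a b. a \<in> S \<Longrightarrow> b \<in> S \<Longrightarrow> E' (f a) (f b) = E a b" "\<And>a. a \<in> S \<Longrightarrow> B' (f a) = B a"
  shows "score B' E' left (f ` S) = score B E left S"
  using assms(2,1,3,4)
proof (induction S arbitrary: left rule: finite_psubset_induct)
  case (psubset S)
  show ?case
  proof (cases "S = {}")
    case False
    have option: "card (removed E' (f ` S) (f x)) = card (removed E S x)"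
      "score B' E' q (f ` S - removed E' (f ` S) (f x)) = score B E q (S - removed E S x)"
      if "x \<in> S" for x q
    proof -
      have sub: "removed E S x \<subseteq> S" "S - removed E S x \<subset> S"
        using removed_subset[OF that] self_in_removed[of x E S] that by blast+
      have "f ` S - f ` removed E S x = f ` (S - removed E S x)"
        by (rule inj_on_image_set_diff[OF psubset.prems(1), symmetric]) (use sub in auto)
      moreover have "card (f ` removed E S x) = card (removed E S x)"
        using card_image[OF inj_on_subset[OF psubset.prems(1) sub(1)]] .
      moreover have "score B' E' q (f ` (S - removed E S x)) = score B E q (S - removed E S x)"
        using psubset.IH[OF sub(2)] psubset.prems sub(2) inj_on_subset[of f S] by blast
      ultimately show "card (removed E' (f ` S) (f x)) = card (removed E S x)"
        "score B' E' q (f ` S - removed E' (f ` S) (f x)) = score B E q (S - removed E S x)"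
        by (simp_all add: removed_image[where E=E and E'=E', OF psubset.prems(1,2) that])
    qed
    have colours: "{u \<in> f ` S. B' u} = f ` {x \<in> S. B x}" "{u \<in> f ` S. \<not> B' u} = f ` {x \<in> S. \<not> B x}"
      using psubset.prems(3) by auto
    have
      "(\<lambda>u. int (card (removed E' (f ` S) u)) + score B' E' False (f ` S - removed E' (f ` S) u))
          ` {u \<in> f ` S. B' u}
        = (\<lambda>x. int (card (removed E S x)) + score B E False (S - removed E S x)) ` {x \<in> S. B x}"
      "(\<lambda>u. - int (card (removed E' (f ` S) u)) + score B' E' True (f ` S - removed E' (f ` S) u))
          ` {u \<in> f ` S. \<not> B' u}
        = (\<lambda>x. - int (card (removed E S x)) + score B E True (S - removed E S x)) ` {x \<in> S. \<not> B x}"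
      unfolding colours image_image using option by (auto intro!: image_cong)
    then show ?thesis
      using score_left[OF psubset.hyps(1) False, of B E] score_right[OF psubset.hyps(1) False, of B E]
        score_left[of "f ` S" B' E'] score_right[of "f ` S" B' E'] psubset.hyps(1) False
      by (cases left) simp_all
  qed simp
qed

section \<open>Moves in bipartite graphs\<close>

locale bipartite_graph =
  fixes B :: "'v \<Rightarrow> bool" and E :: "'v \<Rightarrow> 'v \<Rightarrow> bool"
  assumes sym: "E a b \<Longrightarrow> E b a"
    and bip: "E a b \<Longrightarrow> B a \<noteq> B b"
begin

lemma common_neighbour_same_colour: "E a w \<Longrightarrow> E b w \<Longrightarrow> B a = B b"
  using bip by blast

lemma no_isolated_has_colours:
  assumes "no_isolated E S" "S \<noteq> {}"
  shows "\<exists>x\<in>S. B x" "\<exists>y\<in>S. \<not> B y"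
proof -
  obtain v w where "v \<in> S" "w \<in> S" "E v w"
    using assms unfolding no_isolated_def by blast
  with bip[of v w] show "\<exists>x\<in>S. B x" "\<exists>y\<in>S. \<not> B y"
    by (cases "B v"; blast)+
qed

lemma mem_removed_iff:
  assumes "x \<in> S"
  shows "v \<in> removed E S x \<longleftrightarrow> v \<in> S \<and> (v = x \<or> E x v \<or> (\<forall>w\<in>S. E v w \<longrightarrow> E x w))"
  using assms by (auto simp: removed_def Let_def isolated_in_def dest: sym)

lemma mem_Diff_removed_iff:
  assumes "x \<in> S"
  shows "v \<in> S - removed E S x \<longleftrightarrow> v \<in> S \<and> v \<noteq> x \<and> \<not> E x v \<and> (\<exists>w\<in>S. E v w \<and> \<not> E x w)"
  using mem_removed_iff[OF assms] by blast

lemma no_isolated_Diff_removed: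
  assumes "x \<in> S"
  shows "no_isolated E (S - removed E S x)"
  unfolding no_isolated_def
proof
  fix v assume "v \<in> S - removed E S x"
  then obtain w where "v \<in> S" "w \<in> S" "E v w" "\<not> E x w" "v \<noteq> x" "\<not> E x v"
    unfolding mem_Diff_removed_iff[OF assms] by blast
  moreover have "E w v"
    using sym \<open>E v w\<close> .
  ultimately have "w \<in> S - removed E S x"
    unfolding mem_Diff_removed_iff[OF assms] by auto
  with \<open>E v w\<close> show "\<exists>w\<in>S - removed E S x. E v w" by blast
qed

lemma score_le_card:
  assumes "finite S" "no_isolated E S"
  shows "score B E left S \<le> int (card S)"
  using assms
proof (induction S arbitrary: left rule: finite_psubset_induct)
  case (psubset S)
  show ?case
  proof (cases "S = {}")
    case False
    note colours = no_isolated_has_colours[OF psubset.prems False]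
    have IH: "score B E p (S - removed E S x) \<le> int (card (S - removed E S x))" if "x \<in> S" for x p
      using psubset.IH[of "S - removed E S x"] self_in_removed[of x E S] that
        no_isolated_Diff_removed[OF that] by blast
    obtain x where "x \<in> S"
      "score B E True S = int (card (removed E S x)) + score B E False (S - removed E S x)"
      by (rule score_left_attained[OF psubset.hyps(1) colours(1)])
    with IH[of x False] card_removed_add_card_Diff[OF psubset.hyps(1), of x E]
    have "score B E True S \<le> int (card S)" by linarith
    moreover obtain y where "y \<in> S"
      "score B E False S = - int (card (removed E S y)) + score B E True (S - removed E S y)"
      by (rule score_right_attained[OF psubset.hyps(1) colours(2)])
    with IH[of y True] card_removed_add_card_Diff[OF psubset.hyps(1), of y E]
    have "score B E False S \<le> int (card S)" by linarith
    ultimately show ?thesis by (cases left) simp_all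
  qed simp
qed

(* Non-adjacent vertices of opposite colours are at distance at least three. *)
lemma removed_disjoint_if_far:
  assumes A: "no_isolated E A" "x \<in> A" "y \<in> A" and xy: "B x \<noteq> B y" "\<not> E x y"
  shows "removed E A x \<inter> removed E A y = {}"
proof -
  have closed_nbhd: False
    if "v \<in> removed E A b" "v = a \<or> E a v" "a \<in> A" "b \<in> A" "B a \<noteq> B b" "\<not> E a b" for v a b
  proof -
    have "v \<in> A" "v \<noteq> b" "\<not> E b v"
      using that removed_subset[OF \<open>b \<in> A\<close>] common_neighbour_same_colour[of a v b] sym[of b a]
        self_in_removed[of a E A] by auto
    then have nbrs: "\<forall>w\<in>A. E v w \<longrightarrow> E b w"
      using that(1) mem_removed_iff[OF \<open>b \<in> A\<close>] by blast
    obtain w where "w \<in> A" "E v w"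
      using A(1) \<open>v \<in> A\<close> unfolding no_isolated_def by blast
    show False
      using that(2)
    proof
      assume "v = a"
      with nbrs \<open>w \<in> A\<close> \<open>E v w\<close> show False using common_neighbour_same_colour that(5) by blast
    next
      assume "E a v"
      with nbrs \<open>a \<in> A\<close> show False using sym[of a v] sym[of b a] that(6) by blast
    qed
  qed
  show ?thesis
  proof (rule ccontr)
    assume "removed E A x \<inter> removed E A y \<noteq> {}"
    then obtain v where v: "v \<in> removed E A x" "v \<in> removed E A y" by blast
    then have "v \<in> A" using removed_subset[OF A(2)] by blast
    then obtain w where "w \<in> A" "E v w"
      using A(1) unfolding no_isolated_def by blast
    have "\<not> (v = x \<or> E x v)" using closed_nbhd[OF v(2) _ A(2,3) xy] by blast
    moreover have "\<not> (v = y \<or> E y v)"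
      using closed_nbhd[OF v(1) _ A(3,2)] xy sym[of y x] by metis
    ultimately have "E x w" "E y w"
      using v \<open>w \<in> A\<close> \<open>E v w\<close> mem_removed_iff[OF A(2)] mem_removed_iff[OF A(3)] by blast+
    then show False using common_neighbour_same_colour xy(1) by blast
  qed
qed

lemma removed_Diff_removed_if_far:
  assumes A: "no_isolated E A" "x \<in> A" "y \<in> A" and xy: "B x \<noteq> B y" "\<not> E x y"
  shows "removed E (A - removed E A x) y = removed E A y"
proof (rule set_eqI)
  fix v
  let ?A' = "A - removed E A x"
  have disjoint: "removed E A x \<inter> removed E A y = {}"
    by (rule removed_disjoint_if_far[OF A xy])
  then have y: "y \<in> ?A'" using self_in_removed[of y E A] A(3) by blast
  have "v \<in> ?A'" if "v \<in> removed E A y"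
    using that disjoint removed_subset[OF A(3)] by blast
  moreover have "\<forall>w\<in>A. E v w \<longrightarrow> E y w"
    if v: "v \<in> ?A'" "v \<noteq> y" "\<not> E y v" and nbrs: "\<forall>w\<in>?A'. E v w \<longrightarrow> E y w"
  proof (intro ballI impI)
    fix w assume "w \<in> A" "E v w"
    obtain u where u: "u \<in> A" "E v u" "\<not> E x u" and "v \<noteq> x" "\<not> E x v"
      using v(1) unfolding mem_Diff_removed_iff[OF A(2)] by blast
    have "E u v" using sym[OF u(2)] .
    then have "u \<in> ?A'"
      using u \<open>v \<noteq> x\<close> \<open>\<not> E x v\<close> v(1) sym[of v x] unfolding mem_Diff_removed_iff[OF A(2)] by blast
    then have "E y u" using nbrs u(2) by blast
    have "w \<in> ?A'"
    proof (rule ccontr)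
      assume "w \<notin> ?A'"
      with \<open>w \<in> A\<close> have "w = x \<or> E x w \<or> (\<forall>t\<in>A. E w t \<longrightarrow> E x t)"
        using mem_removed_iff[OF A(2)] by blast
      moreover have "w \<noteq> x" using \<open>E v w\<close> \<open>\<not> E x v\<close> sym[of v x] by blast
      moreover have "\<not> E x w"
        using common_neighbour_same_colour[of x w v] \<open>E v w\<close> xy(1)
          common_neighbour_same_colour[OF \<open>E y u\<close> \<open>E v u\<close>] by blast
      moreover have "E w v" using sym[OF \<open>E v w\<close>] .
      ultimately show False using \<open>\<not> E x v\<close> v(1) by blast
    qed
    with nbrs \<open>E v w\<close> show "E y w" by blast
  qed
  ultimately show "v \<in> removed E ?A' y \<longleftrightarrow> v \<in> removed E A y"
    unfolding mem_removed_iff[OF y] mem_removed_iff[OF A(3)] by blast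
qed

lemma mem_Diff_removed_twice_iff:
  assumes a: "a \<in> T" and b: "b \<in> T - removed E T a"
  shows "v \<in> T - removed E T a - removed E (T - removed E T a) b \<longleftrightarrow>
    v \<in> T \<and> v \<notin> {a, b} \<and> \<not> E a v \<and> \<not> E b v \<and>
    (\<exists>u\<in>T. u \<notin> {a, b} \<and> \<not> E a u \<and> \<not> E b u \<and> E v u)"
proof
  assume "v \<in> T - removed E T a - removed E (T - removed E T a) b"
  then obtain u where "v \<in> T - removed E T a" "v \<noteq> b" "\<not> E b v"
    and u: "u \<in> T - removed E T a" "E v u" "\<not> E b u"
    unfolding mem_Diff_removed_iff[OF b] by blast
  moreover have "u \<noteq> b" using u(2) \<open>\<not> E b v\<close> sym[of v b] by blast
  ultimately show "v \<in> T \<and> v \<notin> {a, b} \<and> \<not> E a v \<and> \<not> E b v \<and>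
      (\<exists>u\<in>T. u \<notin> {a, b} \<and> \<not> E a u \<and> \<not> E b u \<and> E v u)"
    unfolding mem_Diff_removed_iff[OF a] by blast
next
  assume "v \<in> T \<and> v \<notin> {a, b} \<and> \<not> E a v \<and> \<not> E b v \<and>
      (\<exists>u\<in>T. u \<notin> {a, b} \<and> \<not> E a u \<and> \<not> E b u \<and> E v u)"
  then obtain u where v: "v \<in> T" "v \<noteq> a" "v \<noteq> b" "\<not> E a v" "\<not> E b v"
    and u: "u \<in> T" "u \<noteq> a" "\<not> E a u" "\<not> E b u" "E v u" by blast
  have "E u v" using sym[OF u(5)] .
  with u v have "v \<in> T - removed E T a" "u \<in> T - removed E T a"
    unfolding mem_Diff_removed_iff[OF a] by blast+
  with u v show "v \<in> T - removed E T a - removed E (T - removed E T a) b"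
    unfolding mem_Diff_removed_iff[OF b] by blast
qed

lemma removed_eq_if_mutually_removed:
  assumes "x \<in> T" "z \<in> T" "x \<in> removed E T z" "z \<in> removed E T x" "\<not> E x z"
  shows "removed E T x = removed E T z"
proof (cases "x = z")
  case False
  with assms have "\<forall>w\<in>T. E x w \<longleftrightarrow> E z w"
    using mem_removed_iff sym by metis
  with assms show ?thesis
    unfolding set_eq_iff mem_removed_iff[OF assms(1)] mem_removed_iff[OF assms(2)] by metis
qed simp

lemma Diff_removed_twice_commute:
  assumes "a \<in> T" "b \<in> T - removed E T a" "a \<in> T - removed E T b"
  shows "T - removed E T a - removed E (T - removed E T a) b
    = T - removed E T b - removed E (T - removed E T b) a"
proof -
  have "b \<in> T" using assms(2) by blast
  show ?thesis
    unfolding set_eq_iff mem_Diff_removed_twice_iff[OF assms(1,2)]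
      mem_Diff_removed_twice_iff[OF \<open>b \<in> T\<close> assms(3)] by blast
qed

lemma Diff_removed_twice_absorbed:
  assumes a: "a \<in> T" and b: "b \<in> T - removed E T a" and "a \<in> removed E T b"
  shows "T - removed E T a - removed E (T - removed E T a) b = T - removed E T b"
proof -
  have "b \<in> T" "a \<noteq> b" "\<not> E b a"
    using b sym[of b a] unfolding mem_Diff_removed_iff[OF a] by auto
  then have nbrs: "\<forall>w\<in>T. E a w \<longrightarrow> E b w"
    using assms(3) mem_removed_iff by blast
  show ?thesis
    unfolding set_eq_iff mem_Diff_removed_twice_iff[OF a b] mem_Diff_removed_iff[OF \<open>b \<in> T\<close>]
    using nbrs \<open>a \<noteq> b\<close> \<open>\<not> E b a\<close> assms(3) sym by (smt (verit) Diff_iff insert_iff singletonD)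
qed

lemma removed_Un_separated:
  assumes sep: "\<forall>p\<in>P. \<forall>q\<in>Q. \<not> E p q" and Q: "no_isolated E Q" and x: "x \<in> P"
  shows "removed E (P \<union> Q) x = removed E P x"
proof (rule set_eqI)
  fix v
  have x': "x \<in> P \<union> Q" using x by blast
  show "v \<in> removed E (P \<union> Q) x \<longleftrightarrow> v \<in> removed E P x"
  proof (cases "v \<in> Q")
    case True
    then obtain w where "w \<in> Q" "E v w" using Q unfolding no_isolated_def by blast
    with sep x True have "v \<notin> P" "v \<noteq> x" "\<not> E x v" "\<not> E x w" by blast+
    with removed_subset[OF x] \<open>w \<in> Q\<close> \<open>E v w\<close> show ?thesis
      unfolding mem_removed_iff[OF x'] by blast
  next
    case False
    have "\<not> E v q" if "v \<in> P" "q \<in> Q" for q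
      using sep that by blast
    with False show ?thesis
      unfolding mem_removed_iff[OF x'] mem_removed_iff[OF x] by blast
  qed
qed

section \<open>No zugzwang\<close>

lemma score_right_le_left_if_no_zugzwang:
  assumes "finite U" "no_isolated E U"
    and NZ: "\<And>z. z \<in> U \<Longrightarrow> B z \<Longrightarrow>
      score B E False U \<le> int (card (removed E U z)) + score B E False (U - removed E U z)"
  shows "score B E False U \<le> score B E True U"
proof (cases "U = {}")
  case False
  then obtain z where z: "z \<in> U" "B z"
    using no_isolated_has_colours[OF assms(2)] by blast
  then show ?thesis
    using NZ[OF z] score_left_ge[where B=B and E=E, OF assms(1) z] by linarith
qed simp

lemma right_no_zugzwang_step:
  assumes T: "finite T" "no_isolated E T" "x \<in> T" "B x"
    and IH: "\<And>U. U \<subset> T \<Longrightarrow> no_isolated E U \<Longrightarrow> x \<in> U \<Longrightarrow>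
      score B E True U \<le> int (card (removed E U x)) + score B E True (U - removed E U x)"
  shows "score B E False T \<le> int (card (removed E T x)) + score B E False (T - removed E T x)"
proof (cases "T - removed E T x = {}")
  case True
  then have "removed E T x = T" using removed_subset[OF T(3)] by blast
  with True score_le_card[OF T(1,2)] show ?thesis by simp
next
  case False
  let ?Tx = "T - removed E T x"
  have "finite ?Tx" using T(1) by blast
  obtain w where w: "w \<in> ?Tx" "\<not> B w"
    and opt: "score B E False ?Tx
      = - int (card (removed E ?Tx w)) + score B E True (?Tx - removed E ?Tx w)"
    by (rule score_right_attained[OF \<open>finite ?Tx\<close>
          no_isolated_has_colours(2)[OF no_isolated_Diff_removed[OF T(3)] False]])
  have "w \<in> T" "\<not> E x w" "B x \<noteq> B w" "\<not> E w x" "B w \<noteq> B x"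
    using w T(4) sym[of w x] unfolding mem_Diff_removed_iff[OF T(3)] by auto
  \<comment> \<open>Right's best reply w is far from x, so the moves at x and w commute.\<close>
  note far = T(2,3) \<open>w \<in> T\<close> \<open>B x \<noteq> B w\<close> \<open>\<not> E x w\<close>
  have "x \<in> T - removed E T w"
    using removed_disjoint_if_far[OF far] self_in_removed[of x E T] T(3) by blast
  have "T - removed E T w \<subset> T"
    using self_in_removed[of w E T] \<open>w \<in> T\<close> by blast
  moreover have "removed E (T - removed E T w) x = removed E T x"
    using removed_Diff_removed_if_far[OF T(2) \<open>w \<in> T\<close> T(3) \<open>B w \<noteq> B x\<close> \<open>\<not> E w x\<close>] .
  ultimately have IH_w: "score B E True (T - removed E T w)
      \<le> int (card (removed E T x)) + score B E True (T - removed E T w - removed E T x)"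
    using IH[OF _ no_isolated_Diff_removed[OF \<open>w \<in> T\<close>] \<open>x \<in> T - removed E T w\<close>] by simp
  have "score B E False T \<le> - int (card (removed E T w)) + score B E True (T - removed E T w)"
    using score_right_le[of T w B E] T(1) \<open>w \<in> T\<close> w(2) by blast
  also have "\<dots> \<le> - int (card (removed E T w)) + int (card (removed E T x))
      + score B E True (T - removed E T w - removed E T x)"
    using IH_w by linarith
  also have "T - removed E T w - removed E T x = ?Tx - removed E T w"
    by blast
  also have "- int (card (removed E T w)) + int (card (removed E T x))
      + score B E True (?Tx - removed E T w) = int (card (removed E T x)) + score B E False ?Tx"
    using opt removed_Diff_removed_if_far[OF far] by simp
  finally show ?thesis .
qed

lemma left_no_zugzwang_step:
  assumes T: "finite T" "no_isolated E T" "x \<in> T" "B x"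
    and IH: "\<And>U z. U \<subset> T \<Longrightarrow> no_isolated E U \<Longrightarrow> z \<in> U \<Longrightarrow> B z \<Longrightarrow>
      score B E False U \<le> int (card (removed E U z)) + score B E False (U - removed E U z)"
  shows "score B E True T \<le> int (card (removed E T x)) + score B E True (T - removed E T x)"
proof -
  let ?r = "\<lambda>U v. int (card (removed E U v))"
  let ?Tx = "T - removed E T x"
  obtain z where z: "z \<in> T" "B z"
    and opt: "score B E True T = ?r T z + score B E False (T - removed E T z)"
    by (rule score_left_attained[OF T(1) bexI[where P=B, OF T(4,3)]])
  let ?Tz = "T - removed E T z"
  have proper: "T - removed E T v \<subset> T" if "v \<in> T" for v
    using self_in_removed[of v E T] that by blast
  have Tx_right_le_left: "score B E False ?Tx \<le> score B E True ?Tx"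
    using score_right_le_left_if_no_zugzwang[OF _ no_isolated_Diff_removed[OF T(3)]] T(1)
      IH[OF proper[OF T(3)] no_isolated_Diff_removed[OF T(3)]] by blast
  have IH_z: "score B E False ?Tz \<le> ?r ?Tz x + score B E False (?Tz - removed E ?Tz x)" if "x \<in> ?Tz"
    using IH[OF proper[OF z(1)] no_isolated_Diff_removed[OF z(1)] that T(4)] .
  have left_z: "?r ?Tx z + score B E False (?Tx - removed E ?Tx z) \<le> score B E True ?Tx"
    if "z \<in> ?Tx"
    using score_left_ge[of ?Tx z B E] T(1) that z(2) by blast
  have "\<not> E x z" using bip T(4) z(2) by blast
  consider "removed E T z = removed E T x" | "x \<in> ?Tz" "z \<in> ?Tx" | "x \<in> ?Tz" "z \<in> removed E T x"
    | "x \<in> removed E T z" "z \<in> ?Tx"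
    using removed_eq_if_mutually_removed[OF T(3) z(1) _ _ \<open>\<not> E x z\<close>] T(3) z(1) by blast
  then show ?thesis
  proof cases
    case 1
    then show ?thesis using opt Tx_right_le_left by simp
  next
    case 2
    have "?r T z + ?r ?Tz x = ?r T x + ?r ?Tx z"
      using card_removed_twice[OF T(1) z(1) 2(1)] card_removed_twice[OF T(1,3) 2(2)]
        Diff_removed_twice_commute[OF z(1) 2] by simp
    with opt IH_z[OF 2(1)] left_z[OF 2(2)] show ?thesis
      unfolding Diff_removed_twice_commute[OF z(1) 2] by linarith
  next
    case 3
    have "?r T z + ?r ?Tz x = ?r T x"
      using card_removed_twice[OF T(1) z(1) 3(1)] card_removed_add_card_Diff[OF T(1,3), of E]
        Diff_removed_twice_absorbed[OF z(1) 3] by simp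
    with opt IH_z[OF 3(1)] Tx_right_le_left show ?thesis
      unfolding Diff_removed_twice_absorbed[OF z(1) 3] by linarith
  next
    case 4
    have "?r T x + ?r ?Tx z = ?r T z"
      using card_removed_twice[OF T(1,3) 4(2)] card_removed_add_card_Diff[OF T(1) z(1), of E]
        Diff_removed_twice_absorbed[OF T(3) 4(2,1)] by simp
    with opt left_z[OF 4(2)] show ?thesis
      unfolding Diff_removed_twice_absorbed[OF T(3) 4(2,1)] by linarith
  qed
qed

theorem no_zugzwang:
  assumes "finite T" "no_isolated E T" "x \<in> T" "B x"
  shows "score B E False T \<le> int (card (removed E T x)) + score B E False (T - removed E T x)"
    and "score B E True T \<le> int (card (removed E T x)) + score B E True (T - removed E T x)"
proof -
  have "\<forall>x\<in>T. B x \<longrightarrow>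
      score B E False T \<le> int (card (removed E T x)) + score B E False (T - removed E T x) \<and>
      score B E True T \<le> int (card (removed E T x)) + score B E True (T - removed E T x)"
    using assms(1,2)
  proof (induction T rule: finite_psubset_induct)
    case (psubset T)
    show ?case
      using right_no_zugzwang_step[OF psubset.hyps(1) psubset.prems]
        left_no_zugzwang_step[OF psubset.hyps(1) psubset.prems]
        psubset.IH finite_subset[OF psubset_imp_subset psubset.hyps(1)] by blast
  qed
  with assms(3,4)
  show "score B E False T \<le> int (card (removed E T x)) + score B E False (T - removed E T x)"
    and "score B E True T \<le> int (card (removed E T x)) + score B E True (T - removed E T x)"
    by blast+
qed

corollary score_right_le_left:
  assumes "finite U" "no_isolated E U"
  shows "score B E False U \<le> score B E True U"
  using score_right_le_left_if_no_zugzwang[OF assms] no_zugzwang(1)[OF assms] by blast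


end

section \<open>The mirror strategy\<close>

locale mirror_symmetry = bipartite_graph +
  fixes V :: "'v set" and \<sigma> :: "'v \<Rightarrow> 'v"
  assumes V_closed: "E a b \<Longrightarrow> a \<in> V \<longleftrightarrow> b \<in> V"
    and mirror_in: "v \<in> V \<Longrightarrow> \<sigma> v \<in> V"
    and mirror_mirror: "v \<in> V \<Longrightarrow> \<sigma> (\<sigma> v) = v"
    and mirror_adj: "a \<in> V \<Longrightarrow> b \<in> V \<Longrightarrow> E (\<sigma> a) (\<sigma> b) = E a b"
    and mirror_colour: "v \<in> V \<Longrightarrow> B (\<sigma> v) \<noteq> B v"
    and mirror_not_adj: "v \<in> V \<Longrightarrow> \<not> E v (\<sigma> v)"
begin

definition mirror_closed :: "'v set \<Rightarrow> bool" where
  "mirror_closed A \<longleftrightarrow> A \<subseteq> V \<and> finite A \<and> no_isolated E A \<and> \<sigma> ` A = A"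

definition detached :: "'v set \<Rightarrow> bool" where
  "detached Y \<longleftrightarrow> finite Y \<and> no_isolated E Y \<and> Y \<inter> V = {}"

lemma inj_on_mirror: "inj_on \<sigma> V"
  by (metis inj_onI mirror_mirror)

lemma mirror_reply:
  assumes A: "mirror_closed A" and x: "x \<in> A"
  shows "\<sigma> x \<in> A - removed E A x"
    and "removed E (A - removed E A x) (\<sigma> x) = \<sigma> ` removed E A x"
    and "card (\<sigma> ` removed E A x) = card (removed E A x)"
    and "mirror_closed (A - removed E A x - \<sigma> ` removed E A x)"
proof -
  let ?R = "removed E A x"
  have AV: "A \<subseteq> V" "finite A" "no_isolated E A" "\<sigma> ` A = A"
    using A unfolding mirror_closed_def by blast+
  have "x \<in> V" "\<sigma> x \<in> A" using AV(1,4) x by blast+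
  have far: "B x \<noteq> B (\<sigma> x)" "\<not> E x (\<sigma> x)"
    using mirror_colour[OF \<open>x \<in> V\<close>] mirror_not_adj[OF \<open>x \<in> V\<close>] by auto
  have RV: "?R \<subseteq> V" using removed_subset[OF x] AV(1) by blast
  have inj: "inj_on \<sigma> A" using inj_on_subset[OF inj_on_mirror AV(1)] .
  have "removed E A (\<sigma> x) = \<sigma> ` ?R"
    using removed_image[OF inj _ x, of E E] mirror_adj AV(1,4) by auto
  then show "\<sigma> x \<in> A - ?R" and reply: "removed E (A - ?R) (\<sigma> x) = \<sigma> ` ?R"
    using removed_disjoint_if_far[OF AV(3) x \<open>\<sigma> x \<in> A\<close> far] self_in_removed[of "\<sigma> x" E A]
      removed_Diff_removed_if_far[OF AV(3) x \<open>\<sigma> x \<in> A\<close> far] \<open>\<sigma> x \<in> A\<close> by auto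
  show "card (\<sigma> ` ?R) = card ?R"
    using card_image[OF inj_on_subset[OF inj_on_mirror RV]] .
  have "\<sigma> ` \<sigma> ` ?R = ?R"
    using RV mirror_mirror by (force simp: image_image)
  moreover have "\<sigma> ` ?R \<subseteq> V" using RV mirror_in by blast
  then have "\<sigma> ` (A - ?R - \<sigma> ` ?R) = \<sigma> ` (A - ?R) - \<sigma> ` \<sigma> ` ?R"
    by (intro inj_on_image_set_diff[OF inj_on_mirror]) (use AV(1) in auto)
  moreover have "\<sigma> ` (A - ?R) = \<sigma> ` A - \<sigma> ` ?R"
    by (intro inj_on_image_set_diff[OF inj_on_mirror]) (use AV(1) RV in auto)
  ultimately have "\<sigma> ` (A - ?R - \<sigma> ` ?R) = A - ?R - \<sigma> ` ?R"
    unfolding AV(4) by auto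
  moreover have "no_isolated E (A - ?R - \<sigma> ` ?R)"
    using no_isolated_Diff_removed[OF \<open>\<sigma> x \<in> A - ?R\<close>] unfolding reply .
  ultimately show "mirror_closed (A - ?R - \<sigma> ` ?R)"
    using AV unfolding mirror_closed_def by blast
qed

lemma mirror_closed_detached_separated:
  assumes "mirror_closed A" "detached Y" "p \<in> A" "q \<in> Y"
  shows "\<not> E p q" "\<not> E q p" "p \<noteq> q"
  using assms V_closed[of p q] V_closed[of q p] unfolding mirror_closed_def detached_def by blast+

lemma move_in_detached:
  assumes A: "mirror_closed A" and Y: "detached Y" and y: "y \<in> Y"
  shows "removed E (A \<union> Y) y = removed E Y y"
    and "A \<union> Y - removed E Y y = A \<union> (Y - removed E Y y)"
    and "Y - removed E Y y \<subset> Y" "detached (Y - removed E Y y)"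
proof -
  have "\<forall>q\<in>Y. \<forall>p\<in>A. \<not> E q p" "A \<inter> Y = {}"
    using mirror_closed_detached_separated[OF A Y] by blast+
  moreover have "no_isolated E A" using A unfolding mirror_closed_def by blast
  ultimately show "removed E (A \<union> Y) y = removed E Y y"
    using removed_Un_separated[of Y A y] y by (simp add: Un_commute)
  show "A \<union> Y - removed E Y y = A \<union> (Y - removed E Y y)"
    using removed_subset[OF y] \<open>A \<inter> Y = {}\<close> by blast
  show "Y - removed E Y y \<subset> Y" using self_in_removed[of y E Y] y by blast
  show "detached (Y - removed E Y y)"
    using Y no_isolated_Diff_removed[OF y] unfolding detached_def by blast
qed

lemma mirrored_moves:
  assumes A: "mirror_closed A" and Y: "detached Y" and x: "x \<in> A"
  defines "R \<equiv> removed E A x"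
  shows "removed E (A \<union> Y) x = R" and "A \<union> Y - R = (A - R) \<union> Y"
    and "\<sigma> x \<in> (A - R) \<union> Y" and "removed E ((A - R) \<union> Y) (\<sigma> x) = \<sigma> ` R"
    and "(A - R) \<union> Y - \<sigma> ` R = (A - R - \<sigma> ` R) \<union> Y" and "A - R - \<sigma> ` R \<subset> A"
proof -
  have sep: "\<forall>p\<in>A. \<forall>q\<in>Y. \<not> E p q" "A \<inter> Y = {}"
    using mirror_closed_detached_separated[OF A Y] by blast+
  have "no_isolated E Y" using Y unfolding detached_def by blast
  show "removed E (A \<union> Y) x = R"
    unfolding R_def by (rule removed_Un_separated[OF sep(1) \<open>no_isolated E Y\<close> x])
  have "R \<subseteq> A" using removed_subset[OF x] unfolding R_def .
  then show "A \<union> Y - R = (A - R) \<union> Y"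
    using sep(2) by blast
  show "\<sigma> x \<in> (A - R) \<union> Y"
    using mirror_reply(1)[OF A x] unfolding R_def by blast
  have "\<forall>p\<in>A - R. \<forall>q\<in>Y. \<not> E p q" using sep(1) by blast
  then show "removed E ((A - R) \<union> Y) (\<sigma> x) = \<sigma> ` R"
    using removed_Un_separated[OF _ \<open>no_isolated E Y\<close> mirror_reply(1)[OF A x]]
      mirror_reply(2)[OF A x] unfolding R_def by simp
  have "\<sigma> ` R \<subseteq> A"
    using \<open>R \<subseteq> A\<close> A unfolding mirror_closed_def by blast
  then show "(A - R) \<union> Y - \<sigma> ` R = (A - R - \<sigma> ` R) \<union> Y"
    using sep(2) by blast
  show "A - R - \<sigma> ` R \<subset> A"
    using x self_in_removed[of x E A] unfolding R_def by blast
qed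

lemma finite_no_isolated_Un:
  assumes "mirror_closed A" "detached Y"
  shows "finite (A \<union> Y)" "no_isolated E (A \<union> Y)"
  using assms unfolding mirror_closed_def detached_def no_isolated_def by blast+

lemma mirror_bound_left_first:
  assumes A: "mirror_closed A" and Y: "detached Y"
    and IH_A: "\<And>A' q. A' \<subset> A \<Longrightarrow> mirror_closed A' \<Longrightarrow> score B E q (A' \<union> Y) = score B E q Y"
    and IH_Y: "\<And>Y' q. Y' \<subset> Y \<Longrightarrow> detached Y' \<Longrightarrow> score B E q (A \<union> Y') = score B E q Y'"
  shows "score B E True (A \<union> Y) \<le> score B E True Y"
proof (cases "A \<union> Y = {}")
  case False
  note AY = finite_no_isolated_Un[OF A Y]
  obtain z where z: "z \<in> A \<union> Y" "B z" and opt: "score B E True (A \<union> Y)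
      = int (card (removed E (A \<union> Y) z)) + score B E False (A \<union> Y - removed E (A \<union> Y) z)"
    by (rule score_left_attained[OF AY(1) no_isolated_has_colours(1)[OF AY(2) False]])
  show ?thesis
  proof (cases "z \<in> Y")
    case True
    have "finite Y" using Y unfolding detached_def by blast
    with opt True show ?thesis
      using move_in_detached[OF A Y True] IH_Y score_left_ge[where B=B and E=E, OF _ True z(2)]
      by simp
  next
    case False
    with z have "z \<in> A" by blast
    note moves = mirrored_moves[OF A Y this]
    have "finite ((A - removed E A z) \<union> Y)"
      using AY(1) by (rule finite_subset[rotated]) blast
    moreover have "\<not> B (\<sigma> z)"
      using mirror_colour z(2) \<open>z \<in> A\<close> A unfolding mirror_closed_def by blast
    ultimately show ?thesis
      using opt score_right_le[where B=B and E=E, OF _ moves(3)] moves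
        mirror_reply(3,4)[OF A \<open>z \<in> A\<close>] IH_A by simp
  qed
qed simp

lemma mirror_bound_right_first:
  assumes A: "mirror_closed A" and Y: "detached Y"
    and IH_A: "\<And>A' q. A' \<subset> A \<Longrightarrow> mirror_closed A' \<Longrightarrow> score B E q (A' \<union> Y) = score B E q Y"
    and IH_Y: "\<And>Y' q. Y' \<subset> Y \<Longrightarrow> detached Y' \<Longrightarrow> score B E q (A \<union> Y') = score B E q Y'"
  shows "score B E False Y \<le> score B E False (A \<union> Y)"
proof (cases "A \<union> Y = {}")
  case False
  note AY = finite_no_isolated_Un[OF A Y]
  obtain z where z: "z \<in> A \<union> Y" "\<not> B z" and opt: "score B E False (A \<union> Y)
      = - int (card (removed E (A \<union> Y) z)) + score B E True (A \<union> Y - removed E (A \<union> Y) z)"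
    by (rule score_right_attained[OF AY(1) no_isolated_has_colours(2)[OF AY(2) False]])
  show ?thesis
  proof (cases "z \<in> Y")
    case True
    have "finite Y" using Y unfolding detached_def by blast
    with opt True show ?thesis
      using move_in_detached[OF A Y True] IH_Y score_right_le[where B=B and E=E, OF _ True z(2)]
      by simp
  next
    case False
    with z have "z \<in> A" by blast
    note moves = mirrored_moves[OF A Y this]
    have "finite ((A - removed E A z) \<union> Y)"
      using AY(1) by (rule finite_subset[rotated]) blast
    moreover have "B (\<sigma> z)"
      using mirror_colour z(2) \<open>z \<in> A\<close> A unfolding mirror_closed_def by blast
    ultimately show ?thesis
      using opt score_left_ge[where B=B and E=E, OF _ moves(3)] moves
        mirror_reply(3,4)[OF A \<open>z \<in> A\<close>] IH_A by simp
  qed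
qed simp

lemma first_player_in_detached:
  assumes A: "mirror_closed A" and Y: "detached Y" "Y \<noteq> {}"
    and IH_Y: "\<And>Y' q. Y' \<subset> Y \<Longrightarrow> detached Y' \<Longrightarrow> score B E q (A \<union> Y') = score B E q Y'"
  shows "score B E True Y \<le> score B E True (A \<union> Y)"
    and "score B E False (A \<union> Y) \<le> score B E False Y"
proof -
  have Y': "finite Y" "no_isolated E Y" using Y unfolding detached_def by blast+
  note AY = finite_no_isolated_Un[OF A Y(1)]
  obtain y where y: "y \<in> Y" "B y" and "score B E True Y
      = int (card (removed E Y y)) + score B E False (Y - removed E Y y)"
    by (rule score_left_attained[OF \<open>finite Y\<close> no_isolated_has_colours(1)[OF Y'(2) Y(2)]])
  with score_left_ge[where B=B and E=E, OF AY(1) _ y(2)] y(1)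
  show "score B E True Y \<le> score B E True (A \<union> Y)"
    using move_in_detached[OF A Y(1) y(1)] IH_Y by simp
  obtain y where y: "y \<in> Y" "\<not> B y" and "score B E False Y
      = - int (card (removed E Y y)) + score B E True (Y - removed E Y y)"
    by (rule score_right_attained[OF \<open>finite Y\<close> no_isolated_has_colours(2)[OF Y'(2) Y(2)]])
  with score_right_le[where B=B and E=E, OF AY(1) _ y(2)] y(1)
  show "score B E False (A \<union> Y) \<le> score B E False Y"
    using move_in_detached[OF A Y(1) y(1)] IH_Y by simp
qed

theorem mirror_strategy:
  assumes "mirror_closed A" "detached Y"
  shows "score B E left (A \<union> Y) = score B E left Y"
  using assms
proof (induction "card A + card Y" arbitrary: A Y left rule: less_induct)
  case less
  have "finite A" "finite Y"
    using less.prems unfolding mirror_closed_def detached_def by blast+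
  have IH_A: "score B E q (A' \<union> Y) = score B E q Y" if "A' \<subset> A" "mirror_closed A'" for A' q
    using less.hyps[OF _ that(2) less.prems(2)] psubset_card_mono[OF \<open>finite A\<close> that(1)] by simp
  have IH_Y: "score B E q (A \<union> Y') = score B E q Y'" if "Y' \<subset> Y" "detached Y'" for Y' q
    using less.hyps[OF _ less.prems(1) that(2)] psubset_card_mono[OF \<open>finite Y\<close> that(1)] by simp
  note mirror_bounds =
    mirror_bound_left_first[OF less.prems IH_A IH_Y] mirror_bound_right_first[OF less.prems IH_A IH_Y]
  have "score B E True Y \<le> score B E True (A \<union> Y) \<and> score B E False (A \<union> Y) \<le> score B E False Y"
  proof (cases "Y = {}")
    case True
    with mirror_bounds score_right_le_left[of A] less.prems(1) show ?thesis
      unfolding mirror_closed_def by simp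
  next
    case False
    with first_player_in_detached[OF less.prems False IH_Y] show ?thesis by blast
  qed
  with mirror_bounds show ?case by (cases left) auto
qed

end

section \<open>Disjoint sums\<close>

lemma psum_simps:
  "pverts (psum G X) = Inl ` pverts G \<union> Inr ` pverts X"
  "pblack (psum G X) (Inl a) = pblack G a" "pblack (psum G X) (Inr b) = pblack X b"
  "padj (psum G X) (Inl a) (Inl a') = padj G a a'" "padj (psum G X) (Inr b) (Inr b') = padj X b b'"
  "padj (psum G X) (Inl a) (Inr b) = False" "padj (psum G X) (Inr b) (Inl a) = False"
  by (simp_all add: psum_def pverts_def pblack_def padj_def)

lemma isolated_in_psum:
  assumes "no_isolated (padj G) (pverts G)"
  shows "isolated_in (padj (psum G X)) (pverts (psum G X)) = Inr ` isolated_in (padj X) (pverts X)"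
proof (rule set_eqI)
  fix u
  show "u \<in> isolated_in (padj (psum G X)) (pverts (psum G X))
      \<longleftrightarrow> u \<in> Inr ` isolated_in (padj X) (pverts X)"
    using assms by (cases u) (auto simp: isolated_in_def psum_simps no_isolated_def ball_Un)
qed

lemma core_psum:
  assumes "no_isolated (padj G) (pverts G)"
  shows "core (psum G X) = Inl ` pverts G \<union> Inr ` core X"
proof -
  have "core (psum G X) = pverts (psum G X) - Inr ` isolated_in (padj X) (pverts X)"
    unfolding core_def isolated_in_psum[OF assms] ..
  then show ?thesis by (auto simp: psum_simps core_def)
qed

lemma iso_score_psum:
  assumes "no_isolated (padj G) (pverts G)"
  shows "iso_score (psum G X) = iso_score X"
proof -
  have "{v \<in> Inr ` isolated_in (padj X) (pverts X). pblack (psum G X) v}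
      = Inr ` {v \<in> isolated_in (padj X) (pverts X). pblack X v}"
    "{v \<in> Inr ` isolated_in (padj X) (pverts X). \<not> pblack (psum G X) v}
      = Inr ` {v \<in> isolated_in (padj X) (pverts X). \<not> pblack X v}"
    by (auto simp: psum_simps)
  then show ?thesis
    unfolding iso_score_def isolated_in_psum[OF assms] by (simp add: card_image)
qed

lemma no_isolated_core:
  assumes "valid_pos X"
  shows "no_isolated (padj X) (core X)"
  using assms unfolding valid_pos_def no_isolated_def core_def isolated_in_def by blast

lemma bipartite_graph_pos: "valid_pos P \<Longrightarrow> bipartite_graph (pblack P) (padj P)"
  unfolding valid_pos_def by unfold_locales blast+

lemma valid_pos_psum:
  assumes "valid_pos G" "valid_pos X"
  shows "valid_pos (psum G X)"
proof -
  have "padj (psum G X) w u \<and> u \<in> pverts (psum G X) \<and> w \<in> pverts (psum G X) \<and>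
      pblack (psum G X) u \<noteq> pblack (psum G X) w" if "padj (psum G X) u w" for u w
    using assms that by (cases u; cases w) (auto simp: psum_simps valid_pos_def)
  moreover have "\<not> padj (psum G X) u u" for u
    using assms by (cases u) (auto simp: psum_simps valid_pos_def)
  moreover have "finite (pverts (psum G X))"
    using assms by (simp add: psum_simps valid_pos_def)
  ultimately show ?thesis
    unfolding valid_pos_def by blast
qed

theorem is_zero_if_mirror_involution:
  assumes G: "valid_pos G" "no_isolated (padj G) (pverts G)"
    and \<sigma>_in: "\<And>v. v \<in> pverts G \<Longrightarrow> \<sigma> v \<in> pverts G"
    and \<sigma>_\<sigma>: "\<And>v. v \<in> pverts G \<Longrightarrow> \<sigma> (\<sigma> v) = v"
    and \<sigma>_adj: "\<And>a b. a \<in> pverts G \<Longrightarrow> b \<in> pverts G \<Longrightarrow> padj G (\<sigma> a) (\<sigma> b) = padj G a b"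
    and \<sigma>_colour: "\<And>v. v \<in> pverts G \<Longrightarrow> pblack G (\<sigma> v) \<noteq> pblack G v"
    and \<sigma>_not_adj: "\<And>v. v \<in> pverts G \<Longrightarrow> \<not> padj G v (\<sigma> v)"
  shows "is_zero G TYPE('b)"
  unfolding is_zero_def
proof (intro allI impI)
  fix X :: "'b pos"
  assume X: "valid_pos X"
  let ?P = "psum G X"
  interpret bipartite_graph "pblack ?P" "padj ?P"
    by (rule bipartite_graph_pos[OF valid_pos_psum[OF G(1) X]])
  interpret mirror_symmetry "pblack ?P" "padj ?P" "Inl ` pverts G" "map_sum \<sigma> id"
  proof
    fix a b
    assume "padj ?P a b"
    then show "a \<in> Inl ` pverts G \<longleftrightarrow> b \<in> Inl ` pverts G"
      using G(1) unfolding valid_pos_def by (cases a; cases b) (auto simp: psum_simps)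
  qed (use \<sigma>_in \<sigma>_\<sigma> \<sigma>_adj \<sigma>_colour \<sigma>_not_adj in \<open>auto simp: psum_simps\<close>)
  have "\<sigma> ` pverts G = pverts G"
    using \<sigma>_in \<sigma>_\<sigma> by (metis image_subset_iff subsetI subset_antisym imageI)
  then have A: "mirror_closed (Inl ` pverts G)"
    using G unfolding mirror_closed_def valid_pos_def no_isolated_def
    by (auto simp: psum_simps image_image)
  have Y: "detached (Inr ` core X)"
    using X no_isolated_core[OF X] unfolding detached_def valid_pos_def no_isolated_def core_def
    by (auto simp: psum_simps)
  have "score (pblack ?P) (padj ?P) p (core ?P) = score (pblack X) (padj X) p (core X)" for p
  proof -
    have "score (pblack ?P) (padj ?P) p (core ?P) = score (pblack ?P) (padj ?P) p (Inr ` core X)"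
      unfolding core_psum[OF G(2)] by (rule mirror_strategy[OF A Y])
    also have "\<dots> = score (pblack X) (padj X) p (core X)"
      using X by (intro score_image) (auto simp: psum_simps valid_pos_def core_def)
    finally show ?thesis .
  qed
  then show "Ls (psum G X) = Ls X \<and> Rs (psum G X) = Rs X"
    unfolding Ls_def Rs_def iso_score_psum[OF G(2)] score_def[symmetric] by simp
qed

section \<open>Tori and cylinders\<close>

definition path_adj :: "nat \<Rightarrow> nat \<Rightarrow> bool" where
  "path_adj a b \<longleftrightarrow> b = a + 1 \<or> a = b + 1"

definition cycle_adj :: "nat \<Rightarrow> nat \<Rightarrow> nat \<Rightarrow> bool" where
  "cycle_adj n a b \<longleftrightarrow> path_adj a b \<or> (a = 1 \<and> b = n) \<or> (a = n \<and> b = 1)"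

definition box_adj :: "nat \<Rightarrow> nat \<Rightarrow> (nat \<Rightarrow> nat \<Rightarrow> bool) \<Rightarrow> (nat \<Rightarrow> nat \<Rightarrow> bool) \<Rightarrow>
    nat \<times> nat \<Rightarrow> nat \<times> nat \<Rightarrow> bool" where
  "box_adj n m P Q u w \<longleftrightarrow> u \<in> {1..n} \<times> {1..m} \<and> w \<in> {1..n} \<times> {1..m} \<and>
     ((snd u = snd w \<and> P (fst u) (fst w)) \<or> (fst u = fst w \<and> Q (snd u) (snd w)))"

definition box_product ::
    "nat \<Rightarrow> nat \<Rightarrow> (nat \<Rightarrow> nat \<Rightarrow> bool) \<Rightarrow> (nat \<Rightarrow> nat \<Rightarrow> bool) \<Rightarrow> (nat \<times> nat) pos" where
  "box_product n m P Q = ({1..n} \<times> {1..m}, grid_black, box_adj n m P Q)"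

lemma cycle_adj_iff_mod:
  assumes "2 \<le> n" "a \<in> {1..n}" "b \<in> {1..n}"
  shows "(a mod n = (b + 1) mod n \<or> b mod n = (a + 1) mod n) \<longleftrightarrow> cycle_adj n a b"
proof -
  have "c mod n = (if c = n then 0 else c)"
    "(c + 1) mod n = (if c = n then 1 else if c + 1 = n then 0 else c + 1)"
    if "c \<in> {1..n}" for c
    using that assms(1) by (auto simp: mod_if)
  then show ?thesis
    using assms unfolding cycle_adj_def path_adj_def by auto
qed

lemma torus_eq_box:
  assumes "2 \<le> n" "2 \<le> m"
  shows "torus n m = box_product n m (cycle_adj n) (cycle_adj m)"
  unfolding torus_def box_product_def
  using cycle_adj_iff_mod[OF assms(1)] cycle_adj_iff_mod[OF assms(2)]
  by (auto simp: fun_eq_iff tor_adj_def box_adj_def path_adj_def)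

lemma cylinder_eq_box:
  assumes "2 \<le> n"
  shows "cylinder n m = box_product n m (cycle_adj n) path_adj"
  unfolding cylinder_def box_product_def
  using cycle_adj_iff_mod[OF assms(1)]
  by (auto simp: fun_eq_iff cyl_adj_def box_adj_def path_adj_def)

theorem is_zero_box:
  fixes f g :: "nat \<Rightarrow> nat"
  assumes P: "\<And>a b. P a b \<Longrightarrow> P b a" "\<And>a b. P a b \<Longrightarrow> even a \<noteq> even b"
      "\<And>a. a \<in> {1..n} \<Longrightarrow> \<exists>b\<in>{1..n}. P a b"
    and Q: "\<And>a b. Q a b \<Longrightarrow> Q b a" "\<And>a b. Q a b \<Longrightarrow> even a \<noteq> even b"
    and f: "\<And>i. i \<in> {1..n} \<Longrightarrow> f i \<in> {1..n} \<and> f (f i) = i"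
      "\<And>i i'. i \<in> {1..n} \<Longrightarrow> i' \<in> {1..n} \<Longrightarrow> P (f i) (f i') = P i i'"
    and g: "\<And>j. j \<in> {1..m} \<Longrightarrow> g j \<in> {1..m} \<and> g (g j) = j"
      "\<And>j j'. j \<in> {1..m} \<Longrightarrow> j' \<in> {1..m} \<Longrightarrow> Q (g j) (g j') = Q j j'"
    and colour: "\<And>i j. i \<in> {1..n} \<Longrightarrow> j \<in> {1..m} \<Longrightarrow> even (f i + g j) \<noteq> even (i + j)"
    and not_adj: "\<And>i j. i \<in> {1..n} \<Longrightarrow> j \<in> {1..m} \<Longrightarrow>
      \<not> (f i = i \<and> Q j (g j)) \<and> \<not> (g j = j \<and> P i (f i))"
  shows "is_zero (box_product n m P Q) TYPE('b)"
proof (rule is_zero_if_mirror_involution[where \<sigma>="map_prod f g"],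
    unfold box_product_def pverts_def pblack_def padj_def fst_conv snd_conv)
  have "even (fst u + snd u) \<noteq> even (fst w + snd w)" if "box_adj n m P Q u w" for u w
    using that P(2) Q(2) unfolding box_adj_def by auto
  moreover have irrefl: "\<not> P a a" "\<not> Q a a" for a
    using P(2) Q(2) by blast+
  ultimately show "valid_pos ({1..n} \<times> {1..m}, grid_black, box_adj n m P Q)"
    unfolding valid_pos_def pverts_def pblack_def padj_def fst_conv snd_conv grid_black_def
    using P(1) Q(1) irrefl by (auto simp: box_adj_def)
  show "no_isolated (box_adj n m P Q) ({1..n} \<times> {1..m})"
    using P(3) by (fastforce simp: no_isolated_def box_adj_def)
  show "map_prod f g v \<in> {1..n} \<times> {1..m}" "map_prod f g (map_prod f g v) = v"
    "grid_black (map_prod f g v) \<noteq> grid_black v" "\<not> box_adj n m P Q v (map_prod f g v)"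
    if v_in: "v \<in> {1..n} \<times> {1..m}" for v
  proof -
    obtain i j where v: "v = (i, j)" "i \<in> {1..n}" "j \<in> {1..m}"
      using v_in by blast
    then show "map_prod f g v \<in> {1..n} \<times> {1..m}" "map_prod f g (map_prod f g v) = v"
      "grid_black (map_prod f g v) \<noteq> grid_black v" "\<not> box_adj n m P Q v (map_prod f g v)"
      using f(1)[of i] g(1)[of j] colour[of i j] not_adj[of i j]
      by (auto simp: box_adj_def grid_black_def)
  qed
  show "box_adj n m P Q (map_prod f g a) (map_prod f g b) = box_adj n m P Q a b"
    if ab_in: "a \<in> {1..n} \<times> {1..m}" "b \<in> {1..n} \<times> {1..m}" for a b
  proof -
    obtain i j i' j' where ab: "a = (i, j)" "b = (i', j')" "i \<in> {1..n}" "j \<in> {1..m}"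
      "i' \<in> {1..n}" "j' \<in> {1..m}"
      using ab_in by blast
    moreover from ab have "f i = f i' \<longleftrightarrow> i = i'" "g j = g j' \<longleftrightarrow> j = j'"
      using f(1) g(1) by metis+
    ultimately show ?thesis
      using f g by (auto simp: box_adj_def)
  qed
qed

definition half_turn :: "nat \<Rightarrow> nat \<Rightarrow> nat" where
  "half_turn h i = (if i \<le> h then i + h else i - h)"

definition reflection :: "nat \<Rightarrow> nat \<Rightarrow> nat" where
  "reflection m j = m + 1 - j"

lemma half_turn_involution:
  "i \<in> {1..2 * h} \<Longrightarrow> half_turn h i \<in> {1..2 * h} \<and> half_turn h (half_turn h i) = i"
  unfolding half_turn_def by auto

lemma cycle_adj_half_turn:
  "i \<in> {1..2 * h} \<Longrightarrow> i' \<in> {1..2 * h} \<Longrightarrow>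
    cycle_adj (2 * h) (half_turn h i) (half_turn h i') = cycle_adj (2 * h) i i'"
  unfolding half_turn_def cycle_adj_def path_adj_def by (cases "i \<le> h"; cases "i' \<le> h") auto

lemma half_turn_not_adj:
  "2 \<le> h \<Longrightarrow> i \<in> {1..2 * h} \<Longrightarrow> half_turn h i \<noteq> i \<and> \<not> cycle_adj (2 * h) i (half_turn h i)"
  unfolding half_turn_def cycle_adj_def path_adj_def by auto

lemma even_half_turn: "i \<in> {1..2 * h} \<Longrightarrow> even (half_turn h i) \<longleftrightarrow> (even i \<longleftrightarrow> even h)"
  unfolding half_turn_def by auto

lemma reflection_involution:
  "j \<in> {1..m} \<Longrightarrow> reflection m j \<in> {1..m} \<and> reflection m (reflection m j) = j"
  unfolding reflection_def by auto

lemma path_adj_reflection: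
  "j \<in> {1..m} \<Longrightarrow> j' \<in> {1..m} \<Longrightarrow> path_adj (reflection m j) (reflection m j') = path_adj j j'"
  unfolding reflection_def path_adj_def by auto

lemma cycle_adj_reflection:
  assumes "j \<in> {1..m}" "j' \<in> {1..m}"
  shows "cycle_adj m (reflection m j) (reflection m j') = cycle_adj m j j'"
  using assms unfolding cycle_adj_def path_adj_reflection[OF assms] by (auto simp: reflection_def)

lemma even_reflection: "j \<in> {1..m} \<Longrightarrow> even (reflection m j) \<longleftrightarrow> (even j \<longleftrightarrow> odd m)"
  unfolding reflection_def by auto

lemma path_adj_sym: "path_adj a b \<Longrightarrow> path_adj b a"
  unfolding path_adj_def by auto

lemma cycle_adj_sym: "cycle_adj n a b \<Longrightarrow> cycle_adj n b a"
  unfolding cycle_adj_def using path_adj_sym by blast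

lemma path_adj_parity: "path_adj a b \<Longrightarrow> even a \<noteq> even b"
  unfolding path_adj_def by auto

lemma cycle_adj_parity: "even n \<Longrightarrow> cycle_adj n a b \<Longrightarrow> even a \<noteq> even b"
  unfolding cycle_adj_def path_adj_def by auto

lemma cycle_adj_neighbour: "2 \<le> n \<Longrightarrow> a \<in> {1..n} \<Longrightarrow> \<exists>b\<in>{1..n}. cycle_adj n a b"
  unfolding cycle_adj_def path_adj_def by (cases "a = n") auto

corollary is_zero_box_half_turn:
  fixes g :: "nat \<Rightarrow> nat"
  assumes "2 \<le> h"
    and Q: "\<And>a b. Q a b \<Longrightarrow> Q b a" "\<And>a b. Q a b \<Longrightarrow> even a \<noteq> even b"
    and g: "\<And>j. j \<in> {1..m} \<Longrightarrow> g j \<in> {1..m} \<and> g (g j) = j"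
      "\<And>j j'. j \<in> {1..m} \<Longrightarrow> j' \<in> {1..m} \<Longrightarrow> Q (g j) (g j') = Q j j'"
      "\<And>j. j \<in> {1..m} \<Longrightarrow> even (g j) \<longleftrightarrow> (even j \<longleftrightarrow> odd h)"
  shows "is_zero (box_product (2 * h) m (cycle_adj (2 * h)) Q) TYPE('b)"
proof (rule is_zero_box[where f="half_turn h"])
  show "even (half_turn h i + g j) \<noteq> even (i + j)" if "i \<in> {1..2 * h}" "j \<in> {1..m}" for i j
    using even_half_turn[OF that(1)] g(3)[OF that(2)] by auto
  show "\<not> (half_turn h i = i \<and> Q j (g j)) \<and> \<not> (g j = j \<and> cycle_adj (2 * h) i (half_turn h i))"
    if "i \<in> {1..2 * h}" for i j
    using half_turn_not_adj[OF assms(1) that] by blast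
  show "\<exists>b\<in>{1..2 * h}. cycle_adj (2 * h) a b" if "a \<in> {1..2 * h}" for a
    using cycle_adj_neighbour[OF _ that] assms(1) by simp
  show "cycle_adj (2 * h) a b \<Longrightarrow> even a \<noteq> even b" for a b
    using cycle_adj_parity[of "2 * h"] by simp
qed (fact cycle_adj_sym Q g half_turn_involution cycle_adj_half_turn)+

lemma torus_is_zero_wide:
  assumes "2 \<le> h" "2 \<le> m" "even m"
  shows "is_zero (torus (2 * h) m) TYPE('b)"
proof -
  have Q: "cycle_adj m a b \<Longrightarrow> cycle_adj m b a" "cycle_adj m a b \<Longrightarrow> even a \<noteq> even b" for a b
    using cycle_adj_sym cycle_adj_parity[OF assms(3)] by blast+
  have "is_zero (box_product (2 * h) m (cycle_adj (2 * h)) (cycle_adj m)) TYPE('b)"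
  proof (cases "odd h")
    case True
    show ?thesis
      by (rule is_zero_box_half_turn[where g=id]) (use assms True Q in auto)
  next
    case False
    show ?thesis
      by (rule is_zero_box_half_turn[where g="reflection m"])
        (use assms False Q reflection_involution cycle_adj_reflection even_reflection in auto)
  qed
  with assms show ?thesis by (simp add: torus_eq_box)
qed

(* Every vertex of the 2-cycle is adjacent to the other one, so the half-turn must act on the
   long factor. *)
lemma torus_is_zero_narrow:
  assumes "2 \<le> k"
  shows "is_zero (torus 2 (2 * k)) TYPE('b)"
proof -
  define f where "f = (if odd k then id else reflection 2)"
  have "is_zero (box_product 2 (2 * k) (cycle_adj 2) (cycle_adj (2 * k))) TYPE('b)"
  proof (rule is_zero_box[where f=f and g="half_turn k"])
    show "f i \<in> {1..2} \<and> f (f i) = i" "cycle_adj 2 (f i) (f i') = cycle_adj 2 i i'"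
      if "i \<in> {1..2}" "i' \<in> {1..2}" for i i'
      using that unfolding f_def reflection_def cycle_adj_def path_adj_def by auto
    show "even (f i + half_turn k j) \<noteq> even (i + j)" if "i \<in> {1..2}" "j \<in> {1..2 * k}" for i j
      using that even_half_turn[OF that(2)] unfolding f_def reflection_def by auto
    show "\<not> (f i = i \<and> cycle_adj (2 * k) j (half_turn k j)) \<and>
        \<not> (half_turn k j = j \<and> cycle_adj 2 i (f i))"
      if "j \<in> {1..2 * k}" for i j
      using half_turn_not_adj[OF assms that] by blast
    show "\<exists>b\<in>{1..2}. cycle_adj 2 a b" if "a \<in> {1..2}" for a
      using cycle_adj_neighbour[OF _ that] by simp
  qed (use half_turn_involution cycle_adj_half_turn cycle_adj_sym cycle_adj_parity[of 2]
      cycle_adj_parity[of "2 * k"] in auto)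
  with assms show ?thesis by (simp add: torus_eq_box)
qed

lemma cylinder_is_zero:
  assumes "2 \<le> h" "odd h \<or> even m"
  shows "is_zero (cylinder (2 * h) m) TYPE('b)"
proof -
  note Q = path_adj_sym path_adj_parity
  have "is_zero (box_product (2 * h) m (cycle_adj (2 * h)) path_adj) TYPE('b)"
  proof (cases "odd h")
    case True
    show ?thesis
      by (rule is_zero_box_half_turn[where g=id]) (use assms True Q in auto)
  next
    case False
    show ?thesis
      by (rule is_zero_box_half_turn[where g="reflection m"])
        (use assms False Q reflection_involution path_adj_reflection even_reflection in auto)
  qed
  with assms show ?thesis by (simp add: cylinder_eq_box)
qed

theorem mainTheorem12:
  shows "(\<forall>n m. n > 0 \<and> m > 0 \<and> even n \<and> even m \<and> (n \<ge> 4 \<or> m \<ge> 4)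
            \<longrightarrow> is_zero (torus n m) TYPE('b))
       \<and> (\<forall>n m. n > 0 \<and> m > 0 \<and> even n \<and> ((n \<ge> 4 \<and> even m) \<or> (\<exists>k>0. n = 4 * k + 2))
            \<longrightarrow> is_zero (cylinder n m) TYPE('b))"
proof (intro conjI allI impI)
  fix n m :: nat
  assume nm: "n > 0 \<and> m > 0 \<and> even n \<and> even m \<and> (n \<ge> 4 \<or> m \<ge> 4)"
  then obtain h k where hk: "n = 2 * h" "m = 2 * k" by (auto elim!: evenE)
  with nm have "h = 1 \<or> 2 \<le> h" "1 \<le> k" "2 \<le> h \<or> 2 \<le> k" by auto
  with hk show "is_zero (torus n m) TYPE('b)"
    using torus_is_zero_wide[where 'b='b] torus_is_zero_narrow[where 'b='b] by auto
next
  fix n m :: nat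
  assume nm: "n > 0 \<and> m > 0 \<and> even n \<and> ((n \<ge> 4 \<and> even m) \<or> (\<exists>k>0. n = 4 * k + 2))"
  then obtain h where "n = 2 * h" by (auto elim!: evenE)
  with nm have "2 \<le> h" "odd h \<or> even m" by auto presburger
  with \<open>n = 2 * h\<close> show "is_zero (cylinder n m) TYPE('b)"
    using cylinder_is_zero by simp
qed

end
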